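(* Let $\mathcal{C}$ be a pure $m$-dimensional finite simplicial complex embedded in $\mathbb{R}^m$ with $t(\tau)\ge t_0$ for every $\tau\in\mathcal{C}$. Let $\sigma\in\mathcal{C}$ be an $m$-simplex of largest diameter, i.e. $L(\sigma)\ge L(\tau)$ for all $\tau\in\mathcal{C}$, and let $b$ be its barycentre. If $F\colon|\mathcal{C}|\to\mathbb{R}^m$ fixes every vertex of $\mathcal{C}$ and its restriction to every $m$-simplex of $\mathcal{C}$ is a $\xi$-distortion map with $$\xi\le\frac16\,\frac{m}{m+1}\,t_0^2,$$ then $F^{-1}(F(b))=\{b\}$.
   Context: A complex is pure $m$-dimensional if every simplex is a face of an $m$-simplex. For a $j$-simplex $\tau$ ($j\ge1$): $L(\tau)$ is its longest edge length, $a(\tau)$ its smallest altitude (distance from a vertex to the affine hull of the opposite facet), $t(\tau)=a(\tau)/(jL(\tau))$; $t=1$ for vertices. $F$ is a $\xi$-distortion map on a set if $\bigl|\|F(x)-F(y)\|-\|x-y\|\bigr|\le\xi\|x-y\|$ for all $x,y$ in that set. *)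

theory Defs
  imports "HOL-Analysis.Analysis"
begin

definition is_simplex :: "'a::euclidean_space set \<Rightarrow> bool" where
  "is_simplex \<tau> \<longleftrightarrow> finite \<tau> \<and> \<tau> \<noteq> {} \<and> \<not> affine_dependent \<tau>"

definition sdim :: "'a::euclidean_space set \<Rightarrow> nat" where
  "sdim \<tau> = card \<tau> - 1"

definition simplicial_complex :: "'a::euclidean_space set set \<Rightarrow> bool" where
  "simplicial_complex K \<longleftrightarrow> finite K \<and> (\<forall>\<tau>\<in>K. is_simplex \<tau>)
     \<and> (\<forall>\<tau>\<in>K. \<forall>\<rho>. \<rho> \<subseteq> \<tau> \<and> \<rho> \<noteq> {} \<longrightarrow> \<rho> \<in> K)
     \<and> (\<forall>\<tau>\<in>K. \<forall>\<rho>\<in>K. convex hull \<tau> \<inter> convex hull \<rho> = convex hull (\<tau> \<inter> \<rho>))"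

definition pure_complex :: "nat \<Rightarrow> 'a::euclidean_space set set \<Rightarrow> bool" where
  "pure_complex m K \<longleftrightarrow> (\<forall>\<tau>\<in>K. \<exists>\<sigma>\<in>K. sdim \<sigma> = m \<and> \<tau> \<subseteq> \<sigma>)"

definition carrier_complex :: "'a::euclidean_space set set \<Rightarrow> 'a set" where
  "carrier_complex K = (\<Union>\<tau>\<in>K. convex hull \<tau>)"

definition vertices_complex :: "'a::euclidean_space set set \<Rightarrow> 'a set" where
  "vertices_complex K = \<Union>K"

definition Lsimp :: "'a::euclidean_space set \<Rightarrow> real" where
  "Lsimp \<tau> = Max {dist u v | u v. u \<in> \<tau> \<and> v \<in> \<tau>}"

definition asimp :: "'a::euclidean_space set \<Rightarrow> real" where
  "asimp \<tau> = Min ((\<lambda>v. infdist v (affine hull (\<tau> - {v}))) ` \<tau>)"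

definition tsimp :: "'a::euclidean_space set \<Rightarrow> real" where
  "tsimp \<tau> = (if sdim \<tau> = 0 then 1 else asimp \<tau> / (real (sdim \<tau>) * Lsimp \<tau>))"

definition distortion_map :: "real \<Rightarrow> 'a::real_normed_vector set \<Rightarrow> ('a \<Rightarrow> 'b::real_normed_vector) \<Rightarrow> bool" where
  "distortion_map \<xi> S F \<longleftrightarrow>
     (\<forall>x\<in>S. \<forall>y\<in>S. \<bar>norm (F x - F y) - norm (x - y)\<bar> \<le> \<xi> * norm (x - y))"

definition barycentre :: "'a::euclidean_space set \<Rightarrow> 'a" where
  "barycentre \<tau> = (1 / real (card \<tau>)) *\<^sub>R (\<Sum>v\<in>\<tau>. v)"

end

theory Submission
  imports Defs
begin

text \<open>Because \<open>F\<close> fixes the vertices of every \<open>m\<close>-simplex \<open>\<tau>\<close> and distorts distances by at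
  most \<open>\<xi>\<close>, comparing squared distances to the vertices shows that \<open>F\<close> moves each point of
  \<open>\<tau>\<close> by at most \<open>3 m \<xi> L(\<tau>)\<^sup>2 / a(\<tau>) \<le> 3 \<xi> L(\<sigma>) / t0\<close>. Hence \<open>F x = F b\<close> forces
  \<open>\<parallel>x - b\<parallel> \<le> 6 \<xi> L(\<sigma>) / t0 \<le> a(\<sigma>) / (m + 1)\<close>, and the ball of that radius about the
  barycentre lies in \<open>\<sigma>\<close>. On \<open>\<sigma>\<close> the map \<open>F\<close> is a distortion with \<open>\<xi> < 1\<close>, hence
  injective, so \<open>x = b\<close>.\<close>

section \<open>Edge lengths and altitudes\<close>

lemma dist_le_Lsimp:
  assumes "finite \<tau>" "u \<in> \<tau>" "v \<in> \<tau>"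
  shows "dist u v \<le> Lsimp \<tau>"
proof -
  have "{dist u v | u v. u \<in> \<tau> \<and> v \<in> \<tau>} = (\<lambda>(u, v). dist u v) ` (\<tau> \<times> \<tau>)" by auto
  then have "finite {dist u v | u v. u \<in> \<tau> \<and> v \<in> \<tau>}" using assms(1) by simp
  then show ?thesis unfolding Lsimp_def by (rule Max_ge) (use assms in auto)
qed

lemma Lsimp_pos:
  assumes "finite \<tau>" "u \<in> \<tau>" "w \<in> \<tau>" "u \<noteq> w"
  shows "0 < Lsimp \<tau>"
  using dist_le_Lsimp[OF assms(1-3)] assms(4) by (meson order_less_le_trans zero_less_dist_iff)

lemma dist_convex_hull_le_Lsimp:
  fixes \<tau> :: "'a::euclidean_space set"
  assumes "finite \<tau>" "x \<in> convex hull \<tau>" "w \<in> \<tau>"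
  shows "dist x w \<le> Lsimp \<tau>"
proof -
  have "\<tau> \<subseteq> cball w (Lsimp \<tau>)"
    using dist_le_Lsimp[OF assms(1) assms(3)] by (auto simp: dist_commute)
  then have "convex hull \<tau> \<subseteq> cball w (Lsimp \<tau>)" by (simp add: hull_minimal)
  then show ?thesis using assms(2) by (auto simp: dist_commute)
qed

lemma card_ge_2_obtains_distinct:
  assumes "finite A" "2 \<le> card A"
  obtains u v where "u \<in> A" "v \<in> A" "u \<noteq> v"
  using assms card_le_Suc0_iff_eq[OF assms(1)] by fastforce

lemma asimp_le_infdist:
  assumes "finite \<tau>" "v \<in> \<tau>"
  shows "asimp \<tau> \<le> infdist v (affine hull (\<tau> - {v}))"
  unfolding asimp_def using assms by (intro Min_le) auto

lemma asimp_nonneg: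
  assumes "finite \<tau>" "\<tau> \<noteq> {}"
  shows "0 \<le> asimp \<tau>"
  unfolding asimp_def using assms by (subst Min_ge_iff) (auto simp: infdist_nonneg)

lemma asimp_pos:
  fixes \<tau> :: "'a::euclidean_space set"
  assumes "is_simplex \<tau>" "2 \<le> card \<tau>"
  shows "asimp \<tau> > 0"
proof -
  have fin: "finite \<tau>" and ind: "\<not> affine_dependent \<tau>"
    using assms(1) by (auto simp: is_simplex_def)
  obtain u w where uw: "u \<in> \<tau>" "w \<in> \<tau>" "u \<noteq> w"
    using card_ge_2_obtains_distinct[OF fin assms(2)] .
  have "infdist v (affine hull (\<tau> - {v})) > 0" if v: "v \<in> \<tau>" for v
  proof (rule infdist_pos_not_in_closed)
    show "affine hull (\<tau> - {v}) \<noteq> {}" using uw hull_subset[of "\<tau> - {v}"] by blast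
    show "v \<notin> affine hull (\<tau> - {v})" using ind v by (auto simp: affine_dependent_def)
  qed auto
  then show ?thesis
    unfolding asimp_def using fin uw by (subst Min_gr_iff) auto
qed

lemma asimp_le_Lsimp:
  fixes \<tau> :: "'a::euclidean_space set"
  assumes fin: "finite \<tau>" and u: "u \<in> \<tau>" and w: "w \<in> \<tau>" "u \<noteq> w"
  shows "asimp \<tau> \<le> Lsimp \<tau>"
proof -
  have "asimp \<tau> \<le> infdist u (affine hull (\<tau> - {u}))" by (rule asimp_le_infdist[OF fin u])
  also have "\<dots> \<le> dist u w" by (rule infdist_le, rule hull_inc) (use w in simp)
  also have "\<dots> \<le> Lsimp \<tau>" by (rule dist_le_Lsimp[OF fin u w(1)])
  finally show ?thesis .
qed

lemma tsimp_le_one: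
  fixes \<tau> :: "'a::euclidean_space set"
  assumes fin: "finite \<tau>"
  shows "tsimp \<tau> \<le> 1"
proof (cases "sdim \<tau> = 0")
  case False
  then have j: "1 \<le> real (sdim \<tau>)" and "2 \<le> card \<tau>" by (auto simp: sdim_def)
  then obtain u w where uw: "u \<in> \<tau>" "w \<in> \<tau>" "u \<noteq> w"
    using card_ge_2_obtains_distinct[OF fin] by blast
  have L: "0 < Lsimp \<tau>" using Lsimp_pos[OF fin uw] .
  have "Lsimp \<tau> \<le> real (sdim \<tau>) * Lsimp \<tau>" using j L by simp
  then have "asimp \<tau> \<le> real (sdim \<tau>) * Lsimp \<tau>"
    using asimp_le_Lsimp[OF fin uw] by linarith
  then show ?thesis using False L by (simp add: tsimp_def pos_divide_le_eq)
qed (simp add: tsimp_def)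

lemma asimp_ge_of_tsimp_ge:
  assumes "0 < sdim \<tau>" "0 < Lsimp \<tau>" "t \<le> tsimp \<tau>"
  shows "t * real (sdim \<tau>) * Lsimp \<tau> \<le> asimp \<tau>"
  using assms by (simp add: tsimp_def field_simps)

lemma full_dim_simplex:
  fixes \<tau> :: "'a::euclidean_space set"
  assumes s: "is_simplex \<tau>" and d: "sdim \<tau> = DIM('a)"
  shows "finite \<tau>" "card \<tau> = DIM('a) + 1" "affine hull \<tau> = UNIV"
    "0 < asimp \<tau>" "0 < Lsimp \<tau>"
proof -
  show fin: "finite \<tau>" using s by (simp add: is_simplex_def)
  have "card \<tau> > 0" using s fin by (simp add: is_simplex_def card_gt_0_iff)
  then show c: "card \<tau> = DIM('a) + 1" using d by (simp add: sdim_def)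
  show "affine hull \<tau> = UNIV"
    using s c by (intro affine_independent_span_eq) (auto simp: is_simplex_def)
  have c2: "2 \<le> card \<tau>" using c DIM_positive[where 'a='a] by linarith
  show "0 < asimp \<tau>" using s c2 by (rule asimp_pos)
  obtain u w where "u \<in> \<tau>" "w \<in> \<tau>" "u \<noteq> w"
    using card_ge_2_obtains_distinct[OF fin c2] .
  then show "0 < Lsimp \<tau>" by (rule Lsimp_pos[OF fin])
qed

section \<open>Barycentric coordinates\<close>

lemma abs_coeff_mult_infdist_le_norm:
  fixes S :: "'a::euclidean_space set"
  assumes fin: "finite S" and v: "v \<in> S" and sum0: "sum \<mu> S = 0"
  shows "\<bar>\<mu> v\<bar> * infdist v (affine hull (S - {v})) \<le> norm (\<Sum>w\<in>S. \<mu> w *\<^sub>R w)"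
proof (cases "\<mu> v = 0")
  case True then show ?thesis by simp
next
  case False
  define p where "p = (\<Sum>w\<in>S - {v}. (- \<mu> w / \<mu> v) *\<^sub>R w)"
  have "sum \<mu> (S - {v}) = - \<mu> v"
    using sum0 sum.remove[OF fin v, of \<mu>] by simp
  then have "sum (\<lambda>w. - \<mu> w / \<mu> v) (S - {v}) = 1"
    using False by (simp add: sum_divide_distrib[symmetric] sum_negf)
  then have "p \<in> affine hull (S - {v})"
    unfolding p_def using fin by (auto simp: affine_hull_finite)
  then have "infdist v (affine hull (S - {v})) \<le> dist v p"
    by (rule infdist_le)
  moreover have "(\<Sum>w\<in>S. \<mu> w *\<^sub>R w) = \<mu> v *\<^sub>R (v - p)"
  proof -
    have "(\<Sum>w\<in>S. \<mu> w *\<^sub>R w) = \<mu> v *\<^sub>R v + (\<Sum>w\<in>S - {v}. \<mu> w *\<^sub>R w)"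
      using sum.remove[OF fin v] by simp
    moreover have "\<mu> v *\<^sub>R p = - (\<Sum>w\<in>S - {v}. \<mu> w *\<^sub>R w)"
      unfolding p_def scaleR_sum_right using False by (simp add: sum_negf[symmetric])
    ultimately show ?thesis by (simp add: algebra_simps)
  qed
  ultimately show ?thesis
    by (simp add: dist_norm mult_left_mono)
qed

lemma zero_sum_coeffs_bounded_by_asimp:
  fixes \<tau> :: "'a::euclidean_space set"
  assumes fin: "finite \<tau>" and aff: "affine hull \<tau> = UNIV"
  obtains \<mu> where "sum \<mu> \<tau> = 0" "(\<Sum>v\<in>\<tau>. \<mu> v *\<^sub>R v) = d"
    "\<And>v. v \<in> \<tau> \<Longrightarrow> \<bar>\<mu> v\<bar> * asimp \<tau> \<le> norm d"
proof -
  obtain l where l: "sum l \<tau> = 1" "(\<Sum>v\<in>\<tau>. l v *\<^sub>R v) = d"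
    using aff unfolding affine_hull_finite[OF fin] by blast
  obtain l0 where l0: "sum l0 \<tau> = 1" "(\<Sum>v\<in>\<tau>. l0 v *\<^sub>R v) = 0"
    using aff unfolding affine_hull_finite[OF fin] by blast
  define \<mu> where "\<mu> v = l v - l0 v" for v
  have sum0: "sum \<mu> \<tau> = 0" and comb: "(\<Sum>v\<in>\<tau>. \<mu> v *\<^sub>R v) = d"
    using l l0 by (simp_all add: \<mu>_def sum_subtractf scaleR_diff_left)
  have "\<bar>\<mu> v\<bar> * asimp \<tau> \<le> norm d" if v: "v \<in> \<tau>" for v
  proof -
    have "\<bar>\<mu> v\<bar> * asimp \<tau> \<le> \<bar>\<mu> v\<bar> * infdist v (affine hull (\<tau> - {v}))"
      by (intro mult_left_mono asimp_le_infdist fin v) auto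
    also have "\<dots> \<le> norm d"
      using abs_coeff_mult_infdist_le_norm[OF fin v sum0] comb by simp
    finally show ?thesis .
  qed
  with sum0 comb that show ?thesis by blast
qed

lemma norm_mult_asimp_le_of_inner_edges:
  fixes \<tau> :: "'a::euclidean_space set"
  assumes fin: "finite \<tau>" and aff: "affine hull \<tau> = UNIV"
    and edges: "\<And>v w. v \<in> \<tau> \<Longrightarrow> w \<in> \<tau> \<Longrightarrow> \<bar>d \<bullet> (v - w)\<bar> \<le> c"
  shows "norm d * asimp \<tau> \<le> real (card \<tau> - 1) * c"
proof -
  have "\<tau> \<noteq> {}" using aff by auto
  then obtain w0 where w0: "w0 \<in> \<tau>" by blast
  have c: "0 \<le> c" using edges[OF w0 w0] by simp
  obtain \<mu> where sum0: "sum \<mu> \<tau> = 0" and comb: "(\<Sum>v\<in>\<tau>. \<mu> v *\<^sub>R v) = d"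
    and bound: "\<And>v. v \<in> \<tau> \<Longrightarrow> \<bar>\<mu> v\<bar> * asimp \<tau> \<le> norm d"
    using zero_sum_coeffs_bounded_by_asimp[OF fin aff] by blast
  have "(norm d)\<^sup>2 = d \<bullet> (\<Sum>v\<in>\<tau>. \<mu> v *\<^sub>R v)"
    by (simp add: comb power2_norm_eq_inner)
  also have "\<dots> = (\<Sum>v\<in>\<tau>. \<mu> v * (d \<bullet> v)) - (\<Sum>v\<in>\<tau>. \<mu> v) * (d \<bullet> w0)"
    using sum0 by (simp add: inner_sum_right)
  also have "\<dots> = (\<Sum>v\<in>\<tau>. \<mu> v * (d \<bullet> (v - w0)))"
    by (simp add: inner_diff_right right_diff_distrib sum_subtractf sum_distrib_right)
  also have "\<dots> = (\<Sum>v\<in>\<tau> - {w0}. \<mu> v * (d \<bullet> (v - w0)))"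
    using sum.remove[OF fin w0, of "\<lambda>v. \<mu> v * (d \<bullet> (v - w0))"] by simp
  also have "\<dots> \<le> (\<Sum>v\<in>\<tau> - {w0}. \<bar>\<mu> v\<bar> * c)"
  proof (rule sum_mono)
    fix v assume "v \<in> \<tau> - {w0}"
    have "\<mu> v * (d \<bullet> (v - w0)) \<le> \<bar>\<mu> v\<bar> * \<bar>d \<bullet> (v - w0)\<bar>"
      by (simp add: abs_mult[symmetric])
    also have "\<dots> \<le> \<bar>\<mu> v\<bar> * c"
      using edges w0 \<open>v \<in> \<tau> - {w0}\<close> by (intro mult_left_mono) auto
    finally show "\<mu> v * (d \<bullet> (v - w0)) \<le> \<bar>\<mu> v\<bar> * c" .
  qed
  finally have "(norm d)\<^sup>2 * asimp \<tau> \<le> (\<Sum>v\<in>\<tau> - {w0}. \<bar>\<mu> v\<bar> * c) * asimp \<tau>"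
    using asimp_nonneg[OF fin \<open>\<tau> \<noteq> {}\<close>] by (rule mult_right_mono)
  also have "\<dots> = (\<Sum>v\<in>\<tau> - {w0}. \<bar>\<mu> v\<bar> * asimp \<tau> * c)"
    unfolding sum_distrib_right by (simp add: mult_ac)
  also have "\<dots> \<le> (\<Sum>v\<in>\<tau> - {w0}. norm d * c)"
    using bound c by (intro sum_mono mult_right_mono) auto
  also have "\<dots> = norm d * (real (card \<tau> - 1) * c)"
    using fin w0 by simp
  finally have "norm d * (norm d * asimp \<tau>) \<le> norm d * (real (card \<tau> - 1) * c)"
    by (simp add: power2_eq_square mult.assoc)
  then show ?thesis
    using c by (cases "norm d = 0") (auto simp: mult_le_cancel_left_pos)
qed

lemma barycentre_in_convex_hull:
  fixes \<sigma> :: "'a::euclidean_space set"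
  assumes "finite \<sigma>" "\<sigma> \<noteq> {}"
  shows "barycentre \<sigma> \<in> convex hull \<sigma>"
  unfolding convex_hull_finite[OF assms(1)] barycentre_def
  using assms by (intro CollectI exI[of _ "\<lambda>_. 1 / real (card \<sigma>)"]) (simp add: scaleR_sum_right)

text \<open>The barycentric coordinates of a point within distance \<open>r\<close> of the barycentre differ
  from \<open>1 / card \<sigma>\<close> by at most \<open>r / asimp \<sigma>\<close>.\<close>

lemma cball_barycentre_subset_convex_hull:
  fixes \<sigma> :: "'a::euclidean_space set"
  assumes fin: "finite \<sigma>" and aff: "affine hull \<sigma> = UNIV" and a: "asimp \<sigma> > 0"
  shows "cball (barycentre \<sigma>) (asimp \<sigma> / real (card \<sigma>)) \<subseteq> convex hull \<sigma>"
proof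
  fix y assume y: "y \<in> cball (barycentre \<sigma>) (asimp \<sigma> / real (card \<sigma>))"
  define n where "n = real (card \<sigma>)"
  have "\<sigma> \<noteq> {}" using aff by auto
  then have n: "n > 0" using fin by (simp add: n_def card_gt_0_iff)
  obtain \<mu> where sum0: "sum \<mu> \<sigma> = 0" and comb: "(\<Sum>v\<in>\<sigma>. \<mu> v *\<^sub>R v) = y - barycentre \<sigma>"
    and bound: "\<And>v. v \<in> \<sigma> \<Longrightarrow> \<bar>\<mu> v\<bar> * asimp \<sigma> \<le> norm (y - barycentre \<sigma>)"
    using zero_sum_coeffs_bounded_by_asimp[OF fin aff] by blast
  have "0 \<le> 1 / n + \<mu> v" if v: "v \<in> \<sigma>" for v
  proof -
    have "\<bar>\<mu> v\<bar> * asimp \<sigma> \<le> (1 / n) * asimp \<sigma>"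
      using bound[OF v] y by (simp add: n_def dist_norm norm_minus_commute)
    then have "\<bar>\<mu> v\<bar> \<le> 1 / n"
      using a by (rule mult_right_le_imp_le)
    then show ?thesis by linarith
  qed
  moreover have "sum (\<lambda>v. 1 / n + \<mu> v) \<sigma> = 1"
    using sum0 n by (simp add: sum.distrib n_def)
  moreover have "(\<Sum>v\<in>\<sigma>. (1 / n + \<mu> v) *\<^sub>R v) = (1 / n) *\<^sub>R (\<Sum>v\<in>\<sigma>. v) + (\<Sum>v\<in>\<sigma>. \<mu> v *\<^sub>R v)"
    by (simp add: scaleR_add_left sum.distrib scaleR_sum_right)
  then have "(\<Sum>v\<in>\<sigma>. (1 / n + \<mu> v) *\<^sub>R v) = y"
    using comb by (simp add: barycentre_def n_def)
  ultimately show "y \<in> convex hull \<sigma>"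
    unfolding convex_hull_finite[OF fin] by (intro CollectI exI[of _ "\<lambda>v. 1 / n + \<mu> v"]) blast
qed

section \<open>Distortion maps fixing the vertices of a simplex\<close>

lemma distortion_map_nonneg:
  assumes "distortion_map \<xi> S F" "x \<in> S" "y \<in> S" "x \<noteq> y"
  shows "0 \<le> \<xi>"
proof -
  have "\<bar>norm (F x - F y) - norm (x - y)\<bar> \<le> \<xi> * norm (x - y)"
    using assms(1-3) unfolding distortion_map_def by blast
  then have "0 \<le> \<xi> * norm (x - y)"
    by (rule order_trans[OF abs_ge_zero])
  then show ?thesis using assms(4) by (simp add: zero_le_mult_iff)
qed

lemma distortion_map_inj_on:
  assumes "distortion_map \<xi> S F" "\<xi> < 1"
  shows "inj_on F S"
proof (rule inj_onI)
  fix x y assume "x \<in> S" "y \<in> S" "F x = F y"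
  then have "norm (x - y) \<le> \<xi> * norm (x - y)"
    using assms(1) unfolding distortion_map_def by fastforce
  then have "(1 - \<xi>) * norm (x - y) \<le> 0" by (simp add: algebra_simps)
  then show "x = y"
    using assms(2) by (simp add: mult_le_0_iff)
qed

lemma abs_power2_diff_le:
  fixes p s L \<xi> :: real
  assumes "\<bar>p - s\<bar> \<le> \<xi> * s" "0 \<le> s" "s \<le> L" "0 \<le> \<xi>" "\<xi> \<le> 1" "0 \<le> p"
  shows "\<bar>p\<^sup>2 - s\<^sup>2\<bar> \<le> 3 * \<xi> * L\<^sup>2"
proof -
  have "p\<^sup>2 - s\<^sup>2 = (p - s) * (p + s)"
    by (simp add: power2_eq_square algebra_simps)
  then have "\<bar>p\<^sup>2 - s\<^sup>2\<bar> = \<bar>p - s\<bar> * (p + s)"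
    using assms by (simp add: abs_mult)
  also have "\<dots> \<le> (\<xi> * s) * (2 * s + \<xi> * s)"
    using assms by (intro mult_mono) (auto simp: abs_le_iff)
  also have "\<dots> \<le> 3 * \<xi> * s\<^sup>2"
  proof -
    have "(\<xi> * \<xi>) * (s * s) \<le> \<xi> * (s * s)"
      using assms by (intro mult_right_mono mult_left_le_one_le) auto
    then show ?thesis by (simp add: power2_eq_square algebra_simps)
  qed
  also have "\<dots> \<le> 3 * \<xi> * L\<^sup>2"
    using assms by (intro mult_left_mono power_mono) auto
  finally show ?thesis .
qed

text \<open>Since the vertices are fixed, the displacement \<open>d = G x - x\<close> changes each squared
  distance \<open>\<parallel>x - w\<parallel>\<^sup>2\<close> to a vertex \<open>w\<close> by \<open>\<parallel>d\<parallel>\<^sup>2 + 2 d \<bullet> (x - w)\<close>; subtracting two such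
  changes isolates \<open>d \<bullet> (v - w)\<close>.\<close>

lemma distortion_map_displacement_bound:
  fixes \<tau> :: "'a::euclidean_space set" and G :: "'a \<Rightarrow> 'a"
  assumes fin: "finite \<tau>" and aff: "affine hull \<tau> = UNIV"
    and G: "distortion_map \<xi> (convex hull \<tau>) G" and fixed: "\<And>w. w \<in> \<tau> \<Longrightarrow> G w = w"
    and \<xi>: "0 \<le> \<xi>" "\<xi> \<le> 1" and x: "x \<in> convex hull \<tau>"
  shows "norm (G x - x) * asimp \<tau> \<le> real (card \<tau> - 1) * (3 * \<xi> * (Lsimp \<tau>)\<^sup>2)"
proof (rule norm_mult_asimp_le_of_inner_edges[OF fin aff])
  define d where "d = G x - x"
  have change: "(norm (G x - w))\<^sup>2 - (norm (x - w))\<^sup>2 = d \<bullet> d + 2 * (d \<bullet> (x - w))" for w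
  proof -
    have "(norm (G x - w))\<^sup>2 = (norm (d + (x - w)))\<^sup>2" by (simp add: d_def)
    then show ?thesis
      unfolding power2_norm_eq_inner by (simp add: inner_add_left inner_add_right inner_commute)
  qed
  have small: "\<bar>(norm (G x - w))\<^sup>2 - (norm (x - w))\<^sup>2\<bar> \<le> 3 * \<xi> * (Lsimp \<tau>)\<^sup>2" if w: "w \<in> \<tau>" for w
  proof (rule abs_power2_diff_le)
    have "w \<in> convex hull \<tau>" using w by (rule hull_inc)
    then have "\<bar>norm (G x - G w) - norm (x - w)\<bar> \<le> \<xi> * norm (x - w)"
      using G x unfolding distortion_map_def by blast
    then show "\<bar>norm (G x - w) - norm (x - w)\<bar> \<le> \<xi> * norm (x - w)"
      using fixed[OF w] by simp
    show "norm (x - w) \<le> Lsimp \<tau>"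
      using dist_convex_hull_le_Lsimp[OF fin x w] by (simp add: dist_norm)
  qed (use \<xi> in auto)
  fix v w assume "v \<in> \<tau>" "w \<in> \<tau>"
  moreover have "2 * (d \<bullet> (v - w)) = (d \<bullet> d + 2 * (d \<bullet> (x - w))) - (d \<bullet> d + 2 * (d \<bullet> (x - v)))"
    by (simp add: inner_diff_right algebra_simps)
  then have "2 * (d \<bullet> (v - w))
      = ((norm (G x - w))\<^sup>2 - (norm (x - w))\<^sup>2) - ((norm (G x - v))\<^sup>2 - (norm (x - v))\<^sup>2)"
    by (simp only: change)
  ultimately show "\<bar>(G x - x) \<bullet> (v - w)\<bar> \<le> 3 * \<xi> * (Lsimp \<tau>)\<^sup>2"
    using small[of v] small[of w] unfolding d_def by linarith
qed

lemma thick_simplex_displacement_bound: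
  fixes \<tau> :: "'a::euclidean_space set" and G :: "'a \<Rightarrow> 'a"
  assumes \<tau>: "is_simplex \<tau>" "sdim \<tau> = DIM('a)" and thick: "t \<le> tsimp \<tau>"
    and G: "distortion_map \<xi> (convex hull \<tau>) G" "\<And>w. w \<in> \<tau> \<Longrightarrow> G w = w"
    and \<xi>: "0 \<le> \<xi>" "\<xi> \<le> 1" and y: "y \<in> convex hull \<tau>"
  shows "t * norm (G y - y) \<le> 3 * \<xi> * Lsimp \<tau>"
proof -
  note full = full_dim_simplex[OF \<tau>]
  define m where "m = real DIM('a)"
  have m: "0 < m" by (simp add: m_def)
  have "norm (G y - y) * (t * m * Lsimp \<tau>) \<le> norm (G y - y) * asimp \<tau>"
    using asimp_ge_of_tsimp_ge[OF _ full(5) thick] \<tau>(2) by (simp add: m_def mult_left_mono)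
  also have "\<dots> \<le> m * (3 * \<xi> * (Lsimp \<tau>)\<^sup>2)"
    using distortion_map_displacement_bound[OF full(1,3) G \<xi> y] full(2) by (simp add: m_def)
  finally have "(m * Lsimp \<tau>) * (t * norm (G y - y)) \<le> (m * Lsimp \<tau>) * (3 * \<xi> * Lsimp \<tau>)"
    by (simp add: power2_eq_square algebra_simps)
  then show ?thesis using m full(5) by (simp add: mult_le_cancel_left_pos)
qed

lemma le_one_sixth_of_thickness_bound:
  fixes \<sigma> :: "'a::euclidean_space set"
  assumes "finite \<sigma>" "0 \<le> t0" "t0 \<le> tsimp \<sigma>"
    and "\<xi> \<le> (1/6) * (real m / (real m + 1)) * t0\<^sup>2"
  shows "\<xi> \<le> 1/6"
proof -
  have "t0\<^sup>2 \<le> 1" using assms(2,3) tsimp_le_one[OF assms(1)] by (simp add: power_le_one)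
  moreover have "real m / (real m + 1) \<le> 1" by simp
  ultimately have "(1/6) * (real m / (real m + 1)) * t0\<^sup>2 \<le> (1/6) * 1 * 1"
    by (intro mult_mono) auto
  then show ?thesis using assms(4) by linarith
qed

text \<open>The bound is half the radius of the ball about the barycentre inscribed in \<open>\<sigma>\<close>. For
  \<open>t0 = 0\<close> the hypothesis forces \<open>\<xi> = 0\<close> and the displacement bound is used directly.\<close>

lemma displacement_le_half_inradius:
  fixes \<tau> \<sigma> :: "'a::euclidean_space set" and G :: "'a \<Rightarrow> 'a"
  assumes \<tau>: "is_simplex \<tau>" "sdim \<tau> = DIM('a)" and \<sigma>: "is_simplex \<sigma>" "sdim \<sigma> = DIM('a)"
    and t0: "0 \<le> t0" "t0 \<le> tsimp \<tau>" "t0 \<le> tsimp \<sigma>" and L: "Lsimp \<tau> \<le> Lsimp \<sigma>"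
    and G: "distortion_map \<xi> (convex hull \<tau>) G" "\<And>w. w \<in> \<tau> \<Longrightarrow> G w = w"
    and \<xi>: "0 \<le> \<xi>" "\<xi> \<le> (1/6) * (real DIM('a) / (real DIM('a) + 1)) * t0\<^sup>2"
    and y: "y \<in> convex hull \<tau>"
  shows "norm (G y - y) \<le> asimp \<sigma> / (2 * real (card \<sigma>))"
proof -
  note full\<tau> = full_dim_simplex[OF \<tau>] and full\<sigma> = full_dim_simplex[OF \<sigma>]
  define m where "m = real DIM('a)"
  have m: "0 < m" by (simp add: m_def)
  have \<xi>1: "\<xi> \<le> 1"
    using le_one_sixth_of_thickness_bound[OF full\<sigma>(1) t0(1,3) \<xi>(2)] by simp
  show ?thesis
  proof (cases "t0 = 0")
    case True
    then have "norm (G y - y) * asimp \<tau> \<le> 0"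
      using distortion_map_displacement_bound[OF full\<tau>(1,3) G \<xi>(1) \<xi>1 y] \<xi> by simp
    then have "norm (G y - y) \<le> 0" using full\<tau>(4) by (simp add: mult_le_0_iff)
    moreover have "0 \<le> asimp \<sigma> / (2 * real (card \<sigma>))" using full\<sigma>(4) by simp
    ultimately show ?thesis by linarith
  next
    case False
    then have t: "0 < t0" using t0(1) by simp
    have "t0 * norm (G y - y) \<le> 3 * \<xi> * Lsimp \<sigma>"
      using thick_simplex_displacement_bound[OF \<tau> t0(2) G \<xi>(1) \<xi>1 y] L \<xi>(1)
      by (meson mult_left_mono order_trans zero_le_mult_iff zero_le_numeral)
    also have "\<dots> \<le> t0 * (t0 * m * Lsimp \<sigma>) / (2 * (m + 1))"
    proof -
      have "6 * \<xi> * (m + 1) \<le> t0\<^sup>2 * m"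
        using \<xi>(2) m unfolding m_def[symmetric] by (simp add: field_simps)
      then have "6 * \<xi> * (m + 1) * Lsimp \<sigma> \<le> t0\<^sup>2 * m * Lsimp \<sigma>"
        using full\<sigma>(5) by (intro mult_right_mono) auto
      then show ?thesis using m by (simp add: field_simps power2_eq_square)
    qed
    also have "\<dots> \<le> t0 * asimp \<sigma> / (2 * (m + 1))"
      using asimp_ge_of_tsimp_ge[OF _ full\<sigma>(5) t0(3)] \<sigma>(2) t m
      by (intro divide_right_mono mult_left_mono) (auto simp: m_def)
    finally have "t0 * norm (G y - y) \<le> t0 * (asimp \<sigma> / (2 * (m + 1)))" by simp
    then have "norm (G y - y) \<le> asimp \<sigma> / (2 * (m + 1))"
      using t by (rule mult_left_le_imp_le)
    then show ?thesis using full\<sigma>(2) by (simp add: m_def add.commute)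
  qed
qed

theorem mainTheorem5:
  fixes K :: "'a::euclidean_space set set"
    and \<sigma> :: "'a set" and F :: "'a \<Rightarrow> 'a"
    and m :: nat and t0 \<xi> :: real
  assumes dim: "m = DIM('a)"
    and cx: "simplicial_complex K"
    and pure: "pure_complex m K"
    and t0: "0 \<le> t0"
    and thick: "\<forall>\<tau>\<in>K. tsimp \<tau> \<ge> t0"
    and sig: "\<sigma> \<in> K" "sdim \<sigma> = m"
    and largest: "\<forall>\<tau>\<in>K. Lsimp \<tau> \<le> Lsimp \<sigma>"
    and fixv: "\<forall>v\<in>vertices_complex K. F v = v"
    and dist: "\<forall>\<tau>\<in>K. sdim \<tau> = m \<longrightarrow> distortion_map \<xi> (convex hull \<tau>) F"
    and xi: "\<xi> \<le> (1/6) * (real m / (real m + 1)) * t0\<^sup>2"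
  shows "{x \<in> carrier_complex K. F x = F (barycentre \<sigma>)} = {barycentre \<sigma>}"
proof -
  define b where "b = barycentre \<sigma>"
  have simplex: "is_simplex \<tau>" if "\<tau> \<in> K" for \<tau>
    using cx that by (simp add: simplicial_complex_def)
  have \<sigma>: "is_simplex \<sigma>" "sdim \<sigma> = DIM('a)" using simplex sig dim by auto
  note full\<sigma> = full_dim_simplex[OF \<sigma>]
  have "\<sigma> \<noteq> {}" using full\<sigma>(2) by (intro notI) simp
  then have b: "b \<in> convex hull \<sigma>"
    using barycentre_in_convex_hull[OF full\<sigma>(1)] by (simp add: b_def)
  have F\<sigma>: "distortion_map \<xi> (convex hull \<sigma>) F" using dist sig by blast
  have "2 \<le> card \<sigma>" using full\<sigma>(2) by simp
  then obtain u v where uv: "u \<in> \<sigma>" "v \<in> \<sigma>" "u \<noteq> v"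
    using card_ge_2_obtains_distinct[OF full\<sigma>(1)] by blast
  have \<xi>0: "0 \<le> \<xi>"
    using distortion_map_nonneg[OF F\<sigma> hull_inc[OF uv(1)] hull_inc[OF uv(2)] uv(3)] .
  have t\<sigma>: "t0 \<le> tsimp \<sigma>" using thick sig by blast
  have "\<xi> \<le> 1/6" using le_one_sixth_of_thickness_bound[OF full\<sigma>(1) t0 t\<sigma> xi] .
  then have inj: "inj_on F (convex hull \<sigma>)" by (intro distortion_map_inj_on[OF F\<sigma>]) simp
  have close: "norm (F y - y) \<le> asimp \<sigma> / (2 * real (card \<sigma>))"
    if \<tau>: "\<tau> \<in> K" "sdim \<tau> = m" "y \<in> convex hull \<tau>" for \<tau> y
  proof (rule displacement_le_half_inradius[OF simplex[OF \<tau>(1)] _ \<sigma> t0 _ t\<sigma> _ _ _ \<xi>0 xi[unfolded dim] \<tau>(3)])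
    show "sdim \<tau> = DIM('a)" using \<tau>(2) dim by simp
    show "t0 \<le> tsimp \<tau>" using thick \<tau>(1) by blast
    show "Lsimp \<tau> \<le> Lsimp \<sigma>" using largest \<tau>(1) by blast
    show "distortion_map \<xi> (convex hull \<tau>) F" using dist \<tau>(1,2) by blast
    show "\<And>w. w \<in> \<tau> \<Longrightarrow> F w = w" using fixv \<tau>(1) by (auto simp: vertices_complex_def)
  qed
  have "x = b" if x: "x \<in> carrier_complex K" "F x = F b" for x
  proof -
    obtain \<rho> where \<rho>: "\<rho> \<in> K" "x \<in> convex hull \<rho>" using x(1) by (auto simp: carrier_complex_def)
    then obtain \<tau> where \<tau>: "\<tau> \<in> K" "sdim \<tau> = m" "\<rho> \<subseteq> \<tau>"
      using pure unfolding pure_complex_def by blast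
    have x\<tau>: "x \<in> convex hull \<tau>" using \<rho>(2) hull_mono[OF \<tau>(3)] by blast
    have "dist b x \<le> norm (F x - x) + norm (F b - b)"
      using x(2) norm_triangle_ineq4[of "F b - b" "F x - x"] by (simp add: dist_norm norm_minus_commute)
    also have "\<dots> \<le> asimp \<sigma> / real (card \<sigma>)"
      using close[OF \<tau>(1,2) x\<tau>] close[OF sig b] by simp
    finally have "x \<in> convex hull \<sigma>"
      using cball_barycentre_subset_convex_hull[OF full\<sigma>(1,3,4)] by (auto simp: b_def)
    then show "x = b" using inj_onD[OF inj x(2) _ b] by blast
  qed
  moreover have "b \<in> carrier_complex K" using b sig by (auto simp: carrier_complex_def)
  ultimately show ?thesis by (auto simp: b_def)
qed

end
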